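(* Let $s,u\geq 0$ and $m,v,w>0$. Let $\mathfrak{n}$ be the five-dimensional real Lie algebra with basis $\{E_1,\dots,E_5\}$ whose only non-vanishing brackets (up to antisymmetry) are $$[E_1,E_2]=mE_4+sE_5,\qquad [E_1,E_3]=uE_5,\qquad [E_1,E_4]=vE_5,\qquad [E_2,E_3]=wE_5.$$ Equip the corresponding simply connected nilpotent Lie group with the left-invariant Riemannian metric for which $\{E_1,\dots,E_5\}$ is orthonormal. Then this metric is an algebraic Ricci soliton if and only if $$s=u=0,\qquad v=m,\qquad w=\tfrac{\sqrt2}{2}m.$$ In that case $$c=-\tfrac74m^2,\qquad D=\mathrm{diag}\big(\tfrac34m^2,m^2,\tfrac32m^2,\tfrac74m^2,\tfrac52m^2\big),$$ where $D$ is written as a matrix with respect to the basis $\{E_1,\dots,E_5\}$.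
   Context: Let $G$ be a Lie group with Lie algebra $\mathfrak{g}$ and let $g$ be a left-invariant Riemannian metric on $G$. Let $\mathrm{Ric}$ denote the $(1,1)$ Ricci tensor of $g$, viewed as a linear endomorphism of $\mathfrak{g}$. The metric $g$ is an algebraic Ricci soliton if there are a real number $c$ and a derivation $D$ of $\mathfrak{g}$ such that $\mathrm{Ric}=c\,\mathrm{Id}+D$. The notation $\mathrm{diag}(a_1,\dots,a_5)$ denotes the diagonal matrix with these entries. *)

theory Defs
  imports Complex_Main
begin

text \<open>A Lie algebra of dimension n with an orthonormal basis e_0,...,e_(n-1) of a
left-invariant metric is encoded by its structure constants
C i j k = <[e_i,e_j], e_k>.  All tensors below are components w.r.t. this basis.\<close>

text \<open>Levi-Civita connection (Koszul formula for left-invariant fields):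
G i j k = <nabla_(e_i) e_j, e_k>.\<close>
definition lc_conn :: "(nat \<Rightarrow> nat \<Rightarrow> nat \<Rightarrow> real) \<Rightarrow> nat \<Rightarrow> nat \<Rightarrow> nat \<Rightarrow> real" where
  "lc_conn C i j k = (C i j k - C j k i + C k i j) / 2"

text \<open>Riemann curvature R(X,Y)Z = nabla_X nabla_Y Z - nabla_Y nabla_X Z - nabla_[X,Y] Z;
curv n C i j k l = <R(e_i,e_j) e_k, e_l>.\<close>
definition curv :: "nat \<Rightarrow> (nat \<Rightarrow> nat \<Rightarrow> nat \<Rightarrow> real) \<Rightarrow> nat \<Rightarrow> nat \<Rightarrow> nat \<Rightarrow> nat \<Rightarrow> real" where
  "curv n C i j k l =
     (\<Sum>p<n. lc_conn C j k p * lc_conn C i p l - lc_conn C i k p * lc_conn C j p l)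
     - (\<Sum>p<n. C i j p * lc_conn C p k l)"

text \<open>Ricci tensor Ric(Y,Z) = trace (X \<mapsto> R(X,Y)Z); as a (1,1)-tensor its matrix w.r.t. the
orthonormal basis has entry (k,j) = Ric(e_j,e_k), i.e. Ric e_j = sum_k ricci_mat n C k j e_k.\<close>
definition ricci_mat :: "nat \<Rightarrow> (nat \<Rightarrow> nat \<Rightarrow> nat \<Rightarrow> real) \<Rightarrow> nat \<Rightarrow> nat \<Rightarrow> real" where
  "ricci_mat n C k j = (\<Sum>i<n. curv n C i j k i)"

text \<open>A linear map D with matrix d (D e_j = sum_i d i j e_i) is a derivation:
D[e_i,e_j] = [D e_i, e_j] + [e_i, D e_j] for all basis vectors.\<close>
definition is_derivation :: "nat \<Rightarrow> (nat \<Rightarrow> nat \<Rightarrow> nat \<Rightarrow> real) \<Rightarrow> (nat \<Rightarrow> nat \<Rightarrow> real) \<Rightarrow> bool" where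
  "is_derivation n C d \<longleftrightarrow>
     (\<forall>i<n. \<forall>j<n. \<forall>k<n.
        (\<Sum>p<n. C i j p * d k p) = (\<Sum>p<n. d p i * C p j k) + (\<Sum>p<n. d p j * C i p k))"

definition soliton_data :: "nat \<Rightarrow> (nat \<Rightarrow> nat \<Rightarrow> nat \<Rightarrow> real) \<Rightarrow> real \<Rightarrow> (nat \<Rightarrow> nat \<Rightarrow> real) \<Rightarrow> bool" where
  "soliton_data n C c d \<longleftrightarrow> is_derivation n C d \<and>
     (\<forall>i<n. \<forall>j<n. ricci_mat n C i j = c * (if i = j then 1 else 0) + d i j)"

definition algebraic_ricci_soliton :: "nat \<Rightarrow> (nat \<Rightarrow> nat \<Rightarrow> nat \<Rightarrow> real) \<Rightarrow> bool" where
  "algebraic_ricci_soliton n C \<longleftrightarrow> (\<exists>c d. soliton_data n C c d)"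

text \<open>The five-dimensional nilpotent Lie algebra; index p (0..4) stands for E_(p+1).
Brackets: [E1,E2]=m E4 + s E5, [E1,E3]=u E5, [E1,E4]=v E5, [E2,E3]=w E5.\<close>
definition nbr0 :: "real \<Rightarrow> real \<Rightarrow> real \<Rightarrow> real \<Rightarrow> real \<Rightarrow> nat \<Rightarrow> nat \<Rightarrow> nat \<Rightarrow> real" where
  "nbr0 m s u v w i j k =
     (if (i,j,k) = (0,1,3) then m
      else if (i,j,k) = (0,1,4) then s
      else if (i,j,k) = (0,2,4) then u
      else if (i,j,k) = (0,3,4) then v
      else if (i,j,k) = (1,2,4) then w
      else 0)"

definition nstruct :: "real \<Rightarrow> real \<Rightarrow> real \<Rightarrow> real \<Rightarrow> real \<Rightarrow> nat \<Rightarrow> nat \<Rightarrow> nat \<Rightarrow> real" where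
  "nstruct m s u v w i j k = nbr0 m s u v w i j k - nbr0 m s u v w j i k"

end

theory Submission imports Defs begin

text \<open>The E2- and E3-components of the derivation identity for [E1,E2] = m E4 + s E5 read
m Ric_24 + s Ric_25 = 0 and m Ric_34 + s Ric_35 = 0, i.e. s v = u v = 0, so s = u = 0 and
Ric is diagonal. A diagonal derivation is additive along the brackets [E1,E2] = m E4,
[E1,E4] = v E5 and [E2,E3] = w E5; these three linear relations among the Ricci eigenvalues
and c force v = m, 2 w^2 = m^2 and c = -7/4 m^2.\<close>

lemma sum_lessThan_5: "(\<Sum>p<5::nat. f p) = f 0 + f 1 + f 2 + f 3 + (f 4 :: 'a::comm_monoid_add)"
  by (simp add: numeral_eq_Suc add.assoc)

lemma less_5_iff: "(i::nat) < 5 \<longleftrightarrow> i = 0 \<or> i = 1 \<or> i = 2 \<or> i = 3 \<or> i = 4"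
  by auto

lemma soliton_data_derivation_eq:
  assumes "soliton_data n C c d" "i < n" "j < n"
  shows "d i j = ricci_mat n C i j - c * (if i = j then 1 else 0)"
  using assms unfolding soliton_data_def by auto

lemma is_derivationD:
  assumes "is_derivation n C d" "i < n" "j < n" "k < n"
  shows "(\<Sum>p<n. C i j p * d k p) = (\<Sum>p<n. d p i * C p j k) + (\<Sum>p<n. d p j * C i p k)"
  using assms unfolding is_derivation_def by blast

definition nricci :: "real \<Rightarrow> real \<Rightarrow> real \<Rightarrow> real \<Rightarrow> real \<Rightarrow> nat \<Rightarrow> nat \<Rightarrow> real" where
  "nricci m s u v w i j =
    (if (i,j) = (0,0) then -(m^2+s^2+u^2+v^2)/2
     else if (i,j) = (1,1) then -(m^2+s^2+w^2)/2
     else if (i,j) = (2,2) then -(u^2+w^2)/2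
     else if (i,j) = (3,3) then (m^2-v^2)/2
     else if (i,j) = (4,4) then (s^2+u^2+v^2+w^2)/2
     else if (i,j) = (0,1) \<or> (i,j) = (1,0) then -u*w/2
     else if (i,j) = (0,2) \<or> (i,j) = (2,0) then s*w/2
     else if (i,j) = (1,2) \<or> (i,j) = (2,1) then -s*u/2
     else if (i,j) = (1,3) \<or> (i,j) = (3,1) then -s*v/2
     else if (i,j) = (2,3) \<or> (i,j) = (3,2) then -u*v/2
     else if (i,j) = (3,4) \<or> (i,j) = (4,3) then m*s/2
     else 0)"

lemma ricci_mat_nstruct:
  assumes "i < 5" "j < 5"
  shows "ricci_mat 5 (nstruct m s u v w) i j = nricci m s u v w i j"
  using assms unfolding less_5_iff
  by (elim disjE; simp add: ricci_mat_def curv_def sum_lessThan_5 lc_conn_def nstruct_def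
      nbr0_def nricci_def; simp add: field_simps power2_eq_square)

lemma is_derivation_nstruct_eqs:
  assumes "is_derivation 5 (nstruct m s u v w) d"
  shows "m * d 1 3 + s * d 1 4 = 0"
    and "m * d 2 3 + s * d 2 4 = 0"
    and "m * d 3 3 + s * d 3 4 = m * (d 0 0 + d 1 1)"
    and "v * d 4 4 = v * d 0 0 + s * d 1 3 + u * d 2 3 + v * d 3 3"
    and "s * d 0 2 + w * d 4 4 = u * d 0 1 + w * (d 1 1 + d 2 2)"
  using is_derivationD[OF assms, of 0 1 1] is_derivationD[OF assms, of 0 1 2]
    is_derivationD[OF assms, of 0 1 3] is_derivationD[OF assms, of 0 3 4]
    is_derivationD[OF assms, of 1 2 4]
  by (simp_all add: sum_lessThan_5 nstruct_def nbr0_def algebra_simps)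

lemma eq_sqrt2_half_iff:
  fixes m w :: real
  assumes "m > 0" "w > 0"
  shows "w = sqrt 2 / 2 * m \<longleftrightarrow> 2 * w^2 = m^2"
proof -
  have "0 \<le> sqrt 2 / 2 * m" using assms by simp
  then have "w = sqrt 2 / 2 * m \<longleftrightarrow> w^2 = (sqrt 2 / 2 * m)^2"
    using assms by (simp add: power2_eq_iff_nonneg)
  also have "(sqrt 2 / 2 * m)^2 = m^2 / 2"
    by (simp add: power_mult_distrib power_divide)
  finally show ?thesis by linarith
qed

definition nsoliton_eigenvalues :: "real \<Rightarrow> real list" where
  "nsoliton_eigenvalues m = [3/4 * m^2, m^2, 3/2 * m^2, 7/4 * m^2, 5/2 * m^2]"

lemma soliton_data_nstruct_params:
  assumes "m > 0" "v > 0" "w > 0" and sol: "soliton_data 5 (nstruct m s u v w) c d"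
  shows "s = 0 \<and> u = 0 \<and> v = m \<and> 2 * w^2 = m^2 \<and> c = - 7/4 * m^2"
proof -
  have d: "d i j = nricci m s u v w i j - c * (if i = j then 1 else 0)"
    if "i < 5" "j < 5" for i j
    using soliton_data_derivation_eq[OF sol that] ricci_mat_nstruct[OF that] by simp
  have der: "is_derivation 5 (nstruct m s u v w) d"
    using sol unfolding soliton_data_def by blast
  note eqs = is_derivation_nstruct_eqs[OF der]
  have "m * (s * v) = 0"
    using eqs(1) d[of 1 3] d[of 1 4] by (simp add: nricci_def)
  then have s: "s = 0" using assms by simp
  have "m * (u * v) = 0"
    using eqs(2) d[of 2 3] d[of 2 4] by (simp add: nricci_def)
  then have u: "u = 0" using assms by simp
  have d_diag: "d 0 0 = -(m^2+v^2)/2 - c" "d 1 1 = -(m^2+w^2)/2 - c" "d 2 2 = -(w^2)/2 - c"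
      "d 3 3 = (m^2-v^2)/2 - c" "d 4 4 = (v^2+w^2)/2 - c"
    using d[of 0 0] d[of 1 1] d[of 2 2] d[of 3 3] d[of 4 4] s u by (simp_all add: nricci_def)
  have "d 3 3 = d 0 0 + d 1 1" using eqs(3) s assms by simp
  then have A: "3 * m^2 + w^2 + 2 * c = 0" using d_diag by (simp add: field_simps)
  have "v * d 4 4 = v * (d 0 0 + d 3 3)" using eqs(4) s u by (simp add: distrib_left)
  then have "d 4 4 = d 0 0 + d 3 3" using assms by simp
  then have B: "3 * v^2 + w^2 + 2 * c = 0" using d_diag by (simp add: field_simps)
  have "d 4 4 = d 1 1 + d 2 2" using eqs(5) s u assms by simp
  then have C: "m^2 + v^2 + 3 * w^2 + 2 * c = 0" using d_diag by (simp add: field_simps)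
  have v_sq: "v^2 = m^2" using A B by linarith
  then have v: "v = m" using assms by (simp add: power2_eq_iff_nonneg)
  have w: "2 * w^2 = m^2" using A C v_sq by linarith
  have "c = - 7/4 * m^2" using A w by linarith
  with s u v w show ?thesis by blast
qed

lemma soliton_data_nstruct_special:
  assumes "2 * w^2 = m^2"
  shows "soliton_data 5 (nstruct m 0 0 m w) (- 7/4 * m^2)
           (\<lambda>i j. if i = j then nsoliton_eigenvalues m ! i else 0)"
  unfolding soliton_data_def
proof (intro conjI)
  show "is_derivation 5 (nstruct m 0 0 m w) (\<lambda>i j. if i = j then nsoliton_eigenvalues m ! i else 0)"
    unfolding is_derivation_def less_5_iff
    by (intro allI impI, elim disjE)
      (simp_all add: sum_lessThan_5 nstruct_def nbr0_def nsoliton_eigenvalues_def)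
  show "\<forall>i<5. \<forall>j<5. ricci_mat 5 (nstruct m 0 0 m w) i j =
          - 7/4 * m^2 * (if i = j then 1 else 0) + (if i = j then nsoliton_eigenvalues m ! i else 0)"
    using assms unfolding less_5_iff
    by (intro allI impI, elim disjE)
      (simp_all add: ricci_mat_nstruct nricci_def nsoliton_eigenvalues_def)
qed

theorem mainTheorem8:
  fixes m s u v w :: real
  assumes "s \<ge> 0" "u \<ge> 0" "m > 0" "v > 0" "w > 0"
  shows "(algebraic_ricci_soliton 5 (nstruct m s u v w) \<longleftrightarrow>
            s = 0 \<and> u = 0 \<and> v = m \<and> w = sqrt 2 / 2 * m)
       \<and> (\<forall>c d. soliton_data 5 (nstruct m s u v w) c d \<longrightarrow>
            c = - 7 / 4 * m ^ 2 \<and>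
            (\<forall>i<5. \<forall>j<5. d i j =
               (if i = j then [3/4 * m^2, m^2, 3/2 * m^2, 7/4 * m^2, 5/2 * m^2] ! i else 0)))"
proof -
  let ?C = "nstruct m s u v w" and ?D = "\<lambda>i j. if i = j then nsoliton_eigenvalues m ! i else 0"
  note params = soliton_data_nstruct_params[OF assms(3-5)]
  have special: "soliton_data 5 ?C (- 7/4 * m^2) ?D" if "s = 0" "u = 0" "v = m" "2 * w^2 = m^2"
    using soliton_data_nstruct_special[OF that(4)] that(1-3) by simp
  have unique: "c = - 7/4 * m^2 \<and> (\<forall>i<5. \<forall>j<5. d i j = ?D i j)"
    if sol: "soliton_data 5 ?C c d" for c d
  proof -
    have p: "s = 0" "u = 0" "v = m" "2 * w^2 = m^2" "c = - 7/4 * m^2"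
      using params[OF sol] by auto
    have "d i j = ?D i j" if "i < 5" "j < 5" for i j
      using soliton_data_derivation_eq[OF sol that] soliton_data_derivation_eq[OF special[OF p(1-4)] that]
        p(5) by simp
    with p(5) show ?thesis by blast
  qed
  have "algebraic_ricci_soliton 5 ?C \<longleftrightarrow> s = 0 \<and> u = 0 \<and> v = m \<and> 2 * w^2 = m^2"
    using params special unfolding algebraic_ricci_soliton_def by blast
  with unique show ?thesis
    unfolding nsoliton_eigenvalues_def[symmetric] eq_sqrt2_half_iff[OF assms(3,5)] by blast
qed

end
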